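(* Let $\mathcal X$ be a finite set, $\mu\in\mathbb R^{\mathcal X}$ and $\sigma\in(0,\infty)^{\mathcal X}$, and let $\tilde F=(\tilde F_x)_{x\in\mathcal X}$ have independent entries $\tilde F_x\sim\mathcal N(\mu_x,\sigma_x^2)$. Let $\epsilon\in(0,1/4]$ and $\tilde\epsilon:=-\Phi^{-1}(2\epsilon)$. Write $\mu^{\max}=\max_x\mu_x$, $\mu^{\min}=\min_x\mu_x$, $\sigma^{\max}=\max_x\sigma_x$, $\sigma^{\min}=\min_x\sigma_x$, and set $$n=\left\lceil \frac{\mu^{\max}-\mu^{\min}+2\tilde\epsilon\,\sigma^{\max}}{2\sqrt{2\pi}\,\epsilon\,\sigma^{\min}}\right\rceil+2,$$ $f_0=-\infty$, $f_n=+\infty$, and $f_i=\mu^{\min}-\tilde\epsilon\,\sigma^{\max}+\frac{i-1}{n-2}\left(\mu^{\max}-\mu^{\min}+2\tilde\epsilon\,\sigma^{\max}\right)$ for $0<i<n$. Then for every $x\in\mathcal X$, $$\Big|\tilde p_x-\sum_{i=0}^{n-1}\frac{g^x(f_{i+1})+g^x(f_i)}{2}\,\mathbb P[\tilde F_x\in(f_i,f_{i+1}]]\Big|\le\epsilon .$$ Moreover, for fixed $\mu,\sigma$, $n\in\Theta\big(\sqrt{\log(1/\epsilon)}/\epsilon\big)$ as $\epsilon\to0^+$.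
   Context: $\Phi$ and $\phi$ denote the standard Gaussian CDF and PDF. $\tilde p_x:=\mathbb P[\tilde F_x\ge\tilde F_z\ \forall z\neq x]$. For $f\in\mathbb R\cup\{\pm\infty\}$, $g^x(f):=\prod_{z\in\mathcal X\setminus\{x\}}\mathbb P[\tilde F_z\le f]$, so $g^x(-\infty)=0$ and $g^x(+\infty)=1$. *)

theory Defs
  imports "HOL-Probability.Probability" "HOL-Library.Landau_Symbols"
begin

definition Phi :: "real \<Rightarrow> real" where
  "Phi t = measure (density lborel (\<lambda>s. ennreal (std_normal_density s))) {..t}"

definition Phi_inv :: "real \<Rightarrow> real" where
  "Phi_inv p = (THE t. Phi t = p)"

definition eps_tilde :: "real \<Rightarrow> real" where
  "eps_tilde \<epsilon> = - Phi_inv (2 * \<epsilon>)"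

definition grid_n :: "'a set \<Rightarrow> ('a \<Rightarrow> real) \<Rightarrow> ('a \<Rightarrow> real) \<Rightarrow> real \<Rightarrow> nat" where
  "grid_n X \<mu> \<sigma> \<epsilon> =
     nat \<lceil>(Max (\<mu> ` X) - Min (\<mu> ` X) + 2 * eps_tilde \<epsilon> * Max (\<sigma> ` X))
           / (2 * sqrt (2 * pi) * \<epsilon> * Min (\<sigma> ` X))\<rceil> + 2"

definition grid_f :: "'a set \<Rightarrow> ('a \<Rightarrow> real) \<Rightarrow> ('a \<Rightarrow> real) \<Rightarrow> real \<Rightarrow> nat \<Rightarrow> ereal" where
  "grid_f X \<mu> \<sigma> \<epsilon> i =
     (if i = 0 then -\<infinity>
      else if i \<ge> grid_n X \<mu> \<sigma> \<epsilon> then \<infinity>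
      else ereal (Min (\<mu> ` X) - eps_tilde \<epsilon> * Max (\<sigma> ` X)
             + (real i - 1) / (real (grid_n X \<mu> \<sigma> \<epsilon>) - 2)
               * (Max (\<mu> ` X) - Min (\<mu> ` X) + 2 * eps_tilde \<epsilon> * Max (\<sigma> ` X))))"

definition g_fun :: "'b measure \<Rightarrow> ('a \<Rightarrow> 'b \<Rightarrow> real) \<Rightarrow> 'a set \<Rightarrow> 'a \<Rightarrow> ereal \<Rightarrow> real" where
  "g_fun M F X x f = (\<Prod>z\<in>X - {x}. measure M {\<omega> \<in> space M. ereal (F z \<omega>) \<le> f})"

definition p_tilde :: "'b measure \<Rightarrow> ('a \<Rightarrow> 'b \<Rightarrow> real) \<Rightarrow> 'a set \<Rightarrow> 'a \<Rightarrow> real" where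
  "p_tilde M F X x = measure M {\<omega> \<in> space M. \<forall>z\<in>X - {x}. F x \<omega> \<ge> F z \<omega>}"

end

theory Submission
  imports Defs "HOL-Real_Asymp.Real_Asymp"
begin

text \<open>Split \<open>p\<^sub>x\<close> according to the cell \<open>(f\<^sub>i, f\<^sub>i\<^sub>+\<^sub>1]\<close> containing \<open>F\<^sub>x\<close>.
  By independence, the probability that \<open>F\<^sub>x\<close> lies in the cell and beats all other \<open>F\<^sub>z\<close> is
  squeezed between \<open>P[F\<^sub>x \<in> cell] g\<^sup>x(f\<^sub>i)\<close> and \<open>P[F\<^sub>x \<in> cell] g\<^sup>x(f\<^sub>i\<^sub>+\<^sub>1)\<close>, so the
  trapezoidal term errs by at most half the cell probability times the increment of \<open>g\<^sup>x\<close>;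
  these increments telescope to at most \<open>1\<close>. The grid makes every cell probability at most
  \<open>2 \<epsilon>\<close>: the two unbounded cells because \<open>\<Phi>(-\<epsilon>\<^sup>~) = 2 \<epsilon>\<close>, the bounded ones because
  \<open>\<Phi>\<close> is \<open>1/\<surd>(2\<pi>)\<close>-Lipschitz. The growth of \<open>n\<close> follows from
  \<open>\<surd>(ln (1/\<epsilon>))/2 \<le> \<epsilon>\<^sup>~ \<le> \<surd>(2 ln (1/\<epsilon>))\<close>, a consequence of the Gaussian tail bound.\<close>

abbreviation std_normal :: "real measure" where
  "std_normal \<equiv> density lborel (\<lambda>s. ennreal (std_normal_density s))"

interpretation std_normal: prob_space std_normal
  by (rule prob_space_normal_density) simp

lemma emeasure_std_normal:
  "A \<in> sets borel \<Longrightarrow>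
    emeasure std_normal A = (\<integral>\<^sup>+ s. ennreal (std_normal_density s) * indicator A s \<partial>lborel)"
  by (subst emeasure_density) auto

lemma std_normal_density_le: "std_normal_density s \<le> 1 / sqrt (2 * pi)"
  by (simp add: std_normal_density_def divide_right_mono)

lemma std_normal_density_antimono:
  assumes "\<bar>s\<bar> \<le> \<bar>t\<bar>"
  shows "std_normal_density t \<le> std_normal_density s"
proof -
  have "s\<^sup>2 \<le> t\<^sup>2"
    using assms by (metis abs_ge_zero power2_abs power_mono)
  then show ?thesis
    by (simp add: std_normal_density_def divide_right_mono)
qed

lemma measure_std_normal_Ioc_le:
  assumes "a \<le> b"
  shows "measure std_normal {a<..b} \<le> (b - a) / sqrt (2 * pi)"
proof -
  have "emeasure std_normal {a<..b}
      \<le> (\<integral>\<^sup>+ s. ennreal (1 / sqrt (2 * pi)) * indicator {a<..b} s \<partial>lborel)"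
    unfolding emeasure_std_normal[of "{a<..b}", simplified]
    by (intro nn_integral_mono) (auto simp: indicator_def std_normal_density_le)
  also have "\<dots> = ennreal ((b - a) / sqrt (2 * pi))"
    using assms by (simp add: nn_integral_cmult_indicator ennreal_mult'[symmetric])
  finally show ?thesis
    using assms by (simp add: std_normal.emeasure_eq_measure)
qed

lemma measure_std_normal_Ioc_ge:
  assumes "a \<le> b"
  shows "(b - a) * std_normal_density (max \<bar>a\<bar> \<bar>b\<bar>) \<le> measure std_normal {a<..b}"
proof -
  have "ennreal ((b - a) * std_normal_density (max \<bar>a\<bar> \<bar>b\<bar>))
      = (\<integral>\<^sup>+ s. ennreal (std_normal_density (max \<bar>a\<bar> \<bar>b\<bar>)) * indicator {a<..b} s \<partial>lborel)"
    using assms by (subst nn_integral_cmult_indicator) (auto simp: ennreal_mult'[symmetric] mult.commute)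
  also have "\<dots> \<le> emeasure std_normal {a<..b}"
    unfolding emeasure_std_normal[of "{a<..b}", simplified]
    by (intro nn_integral_mono)
       (auto simp: indicator_def intro!: std_normal_density_antimono)
  finally show ?thesis
    by (simp add: std_normal.emeasure_eq_measure)
qed

lemma measure_std_normal_singleton: "measure std_normal {x} = 0"
  by (simp add: measure_def emeasure_std_normal)

lemma Phi_diff:
  assumes "a \<le> b"
  shows "Phi b - Phi a = measure std_normal {a<..b}"
proof -
  have "{..b} = {..a} \<union> {a<..b}"
    using assms by auto
  moreover have "measure std_normal ({..a} \<union> {a<..b})
      = measure std_normal {..a} + measure std_normal {a<..b}"
    by (rule std_normal.finite_measure_Union) auto
  ultimately have "measure std_normal {..b} = measure std_normal {..a} + measure std_normal {a<..b}"
    by simp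
  then show ?thesis
    by (simp add: Phi_def)
qed

lemma Phi_mono: "a \<le> b \<Longrightarrow> Phi a \<le> Phi b"
  using Phi_diff[of a b] measure_nonneg[of std_normal "{a<..b}"] by linarith

lemma strict_mono_Phi: "strict_mono Phi"
proof (rule strict_monoI)
  fix a b :: real
  assume "a < b"
  then have "0 < (b - a) * std_normal_density (max \<bar>a\<bar> \<bar>b\<bar>)"
    by (simp add: normal_density_pos)
  then show "Phi a < Phi b"
    using Phi_diff[of a b] measure_std_normal_Ioc_ge[of a b] \<open>a < b\<close> by simp
qed

lemma Phi_lipschitz: "\<bar>Phi b - Phi a\<bar> \<le> \<bar>b - a\<bar> / sqrt (2 * pi)"
proof (cases "a \<le> b")
  case True
  then show ?thesis
    using Phi_diff[of a b] measure_std_normal_Ioc_le[of a b] Phi_mono[of a b] by simp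
next
  case False
  then show ?thesis
    using Phi_diff[of b a] measure_std_normal_Ioc_le[of b a] Phi_mono[of b a] by simp
qed

lemma continuous_on_Phi: "continuous_on S Phi"
proof (rule lipschitz_on_continuous_on)
  show "lipschitz_on (1 / sqrt (2 * pi)) S Phi"
    using Phi_lipschitz by (auto simp: lipschitz_on_def dist_real_def abs_minus_commute)
qed

lemma measure_std_normal_greaterThan: "measure std_normal {x<..} = 1 - Phi x"
proof -
  have "{x<..} = space std_normal - {..x}"
    by auto
  then show ?thesis
    by (simp only: std_normal.prob_compl Phi_def atMost_borel sets_density sets_lborel)
qed

lemma Phi_minus: "Phi (- x) = 1 - Phi x"
proof -
  have "emeasure std_normal {..-x} = ennreal \<bar>-1\<bar> *
      (\<integral>\<^sup>+ s. ennreal (std_normal_density (0 + -1 * s)) * indicator {..-x} (0 + -1 * s) \<partial>lborel)"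
    unfolding emeasure_std_normal[OF atMost_borel] by (rule nn_integral_real_affine) auto
  also have "\<dots> = emeasure std_normal {x..}"
    by (subst emeasure_std_normal)
       (auto simp: std_normal_density_def indicator_def intro!: nn_integral_cong)
  finally have "Phi (- x) = measure std_normal {x..}"
    by (simp add: Phi_def measure_def)
  also have "\<dots> = measure std_normal {x} + measure std_normal {x<..}"
    by (subst std_normal.finite_measure_Union[symmetric]) (auto intro: arg_cong[where f="measure _"])
  finally show ?thesis
    by (simp add: measure_std_normal_singleton measure_std_normal_greaterThan)
qed

lemma Phi_0: "Phi 0 = 1 / 2"
  using Phi_minus[of 0] by simp

text \<open>For \<open>s \<le> -t \<le> 0\<close> we have \<open>s\<^sup>2 \<ge> t\<^sup>2 + (s + t)\<^sup>2\<close>, so on \<open>{..-t}\<close> the density is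
  dominated by \<open>exp (- t\<^sup>2 / 2)\<close> times the density shifted by \<open>t\<close>, whose mass on \<open>{..0}\<close> is \<open>1/2\<close>.\<close>
lemma Phi_minus_le_exp:
  assumes "0 \<le> t"
  shows "Phi (- t) \<le> exp (- t\<^sup>2 / 2) / 2"
proof -
  have dominated: "ennreal (std_normal_density s) * indicator {..-t} s
      \<le> ennreal (exp (- t\<^sup>2 / 2)) * (ennreal (std_normal_density (t + 1 * s)) * indicator {..0} (t + 1 * s))"
    for s
  proof (cases "s \<le> -t")
    case True
    then have "t * (t + s) \<le> 0"
      using assms by (simp add: mult_nonneg_nonpos)
    then have "- s\<^sup>2 / 2 \<le> - t\<^sup>2 / 2 + - (t + s)\<^sup>2 / 2"
      by (simp add: power2_eq_square algebra_simps)
    then have "std_normal_density s \<le> exp (- t\<^sup>2 / 2) * std_normal_density (t + s)"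
      by (simp add: std_normal_density_def divide_right_mono exp_add[symmetric])
    then show ?thesis
      using True by (simp add: ennreal_mult'[symmetric] indicator_def)
  qed auto
  have "emeasure std_normal {..-t}
      \<le> (\<integral>\<^sup>+ s. ennreal (exp (- t\<^sup>2 / 2)) *
            (ennreal (std_normal_density (t + 1 * s)) * indicator {..0} (t + 1 * s)) \<partial>lborel)"
    unfolding emeasure_std_normal[OF atMost_borel] by (intro nn_integral_mono dominated)
  also have "\<dots> = ennreal (exp (- t\<^sup>2 / 2)) * emeasure std_normal {..0}"
    using nn_integral_real_affine[of "\<lambda>s. ennreal (std_normal_density s) * indicator {..0} s" 1 t]
    by (simp add: nn_integral_cmult emeasure_std_normal)
  also have "\<dots> = ennreal (exp (- t\<^sup>2 / 2) / 2)"
    using Phi_0 by (simp add: std_normal.emeasure_eq_measure Phi_def ennreal_mult[symmetric])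
  finally show ?thesis
    by (simp add: Phi_def std_normal.emeasure_eq_measure)
qed

lemma Phi_attains_le_half:
  assumes "0 < p" "p \<le> 1 / 2"
  shows "\<exists>t. Phi t = p"
proof -
  define T where "T = sqrt (2 * ln (1 / p))"
  have "0 \<le> T"
    using assms by (simp add: T_def)
  have "exp (- T\<^sup>2 / 2) = p"
    using assms by (simp add: T_def ln_div)
  then have "Phi (- T) \<le> p"
    using Phi_minus_le_exp[OF \<open>0 \<le> T\<close>] assms by simp
  moreover have "p \<le> Phi 0"
    using assms Phi_0 by simp
  ultimately show ?thesis
    using IVT'[of Phi "- T" p 0, OF _ _ _ continuous_on_Phi] \<open>0 \<le> T\<close> by auto
qed

lemma Phi_surj:
  assumes "0 < p" "p < 1"
  shows "\<exists>t. Phi t = p"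
proof (cases "p \<le> 1 / 2")
  case False
  then obtain t where "Phi t = 1 - p"
    using Phi_attains_le_half[of "1 - p"] assms by auto
  then have "Phi (- t) = p"
    by (simp add: Phi_minus)
  then show ?thesis ..
qed (use Phi_attains_le_half assms in blast)

lemma Phi_Phi_inv:
  assumes "0 < p" "p < 1"
  shows "Phi (Phi_inv p) = p"
proof -
  obtain t where "Phi t = p"
    using Phi_surj[OF assms] ..
  moreover have "Phi_inv p = t"
    unfolding Phi_inv_def
    using \<open>Phi t = p\<close> strict_mono_eq[OF strict_mono_Phi] by (intro the_equality) auto
  ultimately show ?thesis
    by simp
qed

lemma Phi_minus_eps_tilde:
  assumes "0 < e" "e \<le> 1 / 4"
  shows "Phi (- eps_tilde e) = 2 * e"
  using Phi_Phi_inv[of "2 * e"] assms by (simp add: eps_tilde_def)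

lemma eps_tilde_nonneg:
  assumes "0 < e" "e \<le> 1 / 4"
  shows "0 \<le> eps_tilde e"
proof -
  have "Phi (- eps_tilde e) \<le> Phi 0"
    using Phi_minus_eps_tilde[OF assms] Phi_0 assms by simp
  then show ?thesis
    by (simp add: strict_mono_less_eq[OF strict_mono_Phi])
qed

lemma eps_tilde_le_sqrt_ln:
  assumes "0 < e" "e \<le> 1 / 4"
  shows "eps_tilde e \<le> sqrt 2 * sqrt (ln (1 / e))"
proof -
  define t where "t = eps_tilde e"
  have "2 * e \<le> exp (- t\<^sup>2 / 2) / 2"
    using Phi_minus_le_exp[of t] Phi_minus_eps_tilde[OF assms] eps_tilde_nonneg[OF assms]
    by (simp add: t_def)
  then have "ln (4 * e) \<le> ln (exp (- t\<^sup>2 / 2))"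
    using assms by (subst ln_le_cancel_iff) auto
  then have "ln 4 + ln e \<le> - t\<^sup>2 / 2"
    using assms by (simp add: ln_mult)
  moreover have "0 \<le> ln (4 :: real)"
    by simp
  ultimately have "t\<^sup>2 \<le> - 2 * ln e"
    by linarith
  also have "\<dots> = 2 * ln (1 / e)"
    using assms by (simp add: ln_div)
  finally have "t\<^sup>2 \<le> 2 * ln (1 / e)" .
  then show ?thesis
    by (simp add: t_def real_le_rsqrt real_sqrt_mult[symmetric])
qed

text \<open>The mass of \<open>{-t-1<..-t}\<close> is at least the density at \<open>t + 1\<close> and at most \<open>\<Phi>(-t) = 2 e\<close>.\<close>
lemma eps_tilde_ge_sqrt_ln:
  assumes e: "0 < e" "e \<le> 1 / 4" and "10 \<le> ln (1 / e)"
  shows "sqrt (ln (1 / e)) / 2 \<le> eps_tilde e"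
proof -
  define t where "t = eps_tilde e"
  define L where "L = ln (1 / e)"
  have "0 \<le> t"
    using eps_tilde_nonneg[OF e] by (simp add: t_def)
  have "10 \<le> L"
    using assms(3) by (simp add: L_def)
  have "std_normal_density (t + 1) \<le> Phi (- t) - Phi (- t - 1)"
    using measure_std_normal_Ioc_ge[of "- t - 1" "- t"] Phi_diff[of "- t - 1" "- t"] \<open>0 \<le> t\<close>
    by (simp add: add.commute)
  also have "\<dots> \<le> 2 * e"
    using Phi_minus_eps_tilde[OF e] by (simp add: t_def Phi_def)
  finally have "exp (- (t + 1)\<^sup>2 / 2) \<le> 2 * e * sqrt (2 * pi)"
    by (simp add: std_normal_density_def field_simps)
  also have "\<dots> \<le> 6 * e"
    using e pi_less_4 real_sqrt_le_mono[of "2 * pi" 9] by simp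
  finally have "ln (exp (- (t + 1)\<^sup>2 / 2)) \<le> ln (6 * e)"
    using e by (subst ln_le_cancel_iff) auto
  then have "- (t + 1)\<^sup>2 / 2 \<le> ln 6 + ln e"
    using e by (simp add: ln_mult)
  moreover have "ln (6 :: real) \<le> 5"
    using ln_le_minus_one[of 6] by simp
  ultimately have "L \<le> (t + 1)\<^sup>2"
    using \<open>10 \<le> L\<close> e by (simp add: L_def ln_div)
  then have "sqrt L \<le> t + 1"
    using \<open>0 \<le> t\<close> by (intro real_le_lsqrt) auto
  moreover have "2 \<le> sqrt L"
    using real_sqrt_le_mono[of 4 L] \<open>10 \<le> L\<close> by simp
  ultimately show ?thesis
    by (simp add: t_def L_def)
qed

context
  fixes M :: "'b measure" and Y :: "'b \<Rightarrow> real" and m s :: real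
  assumes prob_M: "prob_space M" and s_pos: "0 < s"
    and Y_normal: "distributed M lborel Y (\<lambda>t. ennreal (normal_density m s t))"
begin

lemma prob_normal_standardized:
  assumes "A \<in> sets borel"
  shows "measure M {\<omega> \<in> space M. (Y \<omega> - m) / s \<in> A} = measure std_normal A"
proof -
  have "distributed M lborel (\<lambda>\<omega>. (Y \<omega> - m) / s) (\<lambda>t. ennreal (std_normal_density t))"
    using prob_space.normal_standard_normal_convert[OF prob_M s_pos] Y_normal by simp
  then have "emeasure M ((\<lambda>\<omega>. (Y \<omega> - m) / s) -` A \<inter> space M) = emeasure std_normal A"
    using assms by (simp add: distributed_emeasure emeasure_std_normal)
  then show ?thesis
    by (simp add: measure_def vimage_def Int_def conj_commute)
qed

lemma prob_normal_le_lower_tail: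
  assumes "c \<le> m - t * s"
  shows "measure M {\<omega> \<in> space M. Y \<omega> \<le> c} \<le> Phi (- t)"
proof -
  have "measure M {\<omega> \<in> space M. Y \<omega> \<le> c} = Phi ((c - m) / s)"
    using prob_normal_standardized[of "{..(c - m) / s}"] s_pos
    by (simp add: Phi_def divide_le_cancel)
  also have "\<dots> \<le> Phi (- t)"
    using assms s_pos by (intro Phi_mono) (simp add: pos_divide_le_eq)
  finally show ?thesis .
qed

lemma prob_normal_gt_upper_tail:
  assumes "m + t * s \<le> c"
  shows "measure M {\<omega> \<in> space M. c < Y \<omega>} \<le> Phi (- t)"
proof -
  have "measure M {\<omega> \<in> space M. c < Y \<omega>} = measure std_normal {(c - m) / s<..}"
    using prob_normal_standardized[of "{(c - m) / s<..}"] s_pos by (simp add: divide_less_cancel)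
  also have "\<dots> = 1 - Phi ((c - m) / s)"
    by (rule measure_std_normal_greaterThan)
  also have "\<dots> = Phi (- ((c - m) / s))"
    by (simp add: Phi_minus)
  also have "\<dots> \<le> Phi (- t)"
    using assms s_pos by (intro Phi_mono) (simp add: pos_le_divide_eq)
  finally show ?thesis .
qed

lemma prob_normal_Ioc_le:
  assumes "a \<le> b"
  shows "measure M {\<omega> \<in> space M. a < Y \<omega> \<and> Y \<omega> \<le> b} \<le> (b - a) / (s * sqrt (2 * pi))"
proof -
  have "measure M {\<omega> \<in> space M. a < Y \<omega> \<and> Y \<omega> \<le> b}
      = measure std_normal {(a - m) / s<..(b - m) / s}"
    using prob_normal_standardized[of "{(a - m) / s<..(b - m) / s}"] s_pos
    by (simp add: divide_le_cancel divide_less_cancel)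
  also have "\<dots> \<le> ((b - m) / s - (a - m) / s) / sqrt (2 * pi)"
    using assms s_pos by (intro measure_std_normal_Ioc_le) (simp add: divide_right_mono)
  also have "\<dots> = (b - a) / (s * sqrt (2 * pi))"
    by (simp add: diff_divide_distrib[symmetric])
  finally show ?thesis .
qed

end

lemma trapezoid_sum_error:
  fixes a q G :: "nat \<Rightarrow> real"
  assumes q_bounds: "\<And>i. i < n \<Longrightarrow> a i * G i \<le> q i \<and> q i \<le> a i * G (Suc i)"
    and a_bounds: "\<And>i. i < n \<Longrightarrow> 0 \<le> a i \<and> a i \<le> 2 * \<epsilon>"
    and G_mono: "\<And>i. i < n \<Longrightarrow> G i \<le> G (Suc i)"
    and "0 \<le> G 0" "G n \<le> 1" "0 \<le> \<epsilon>"
  shows "\<bar>(\<Sum>i<n. q i) - (\<Sum>i<n. (G (Suc i) + G i) / 2 * a i)\<bar> \<le> \<epsilon>"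
proof -
  have term_error: "\<bar>q i - (G (Suc i) + G i) / 2 * a i\<bar> \<le> \<epsilon> * (G (Suc i) - G i)" if "i < n" for i
  proof -
    have "\<bar>q i - (G (Suc i) + G i) / 2 * a i\<bar> \<le> a i / 2 * (G (Suc i) - G i)"
      using q_bounds[OF that] unfolding abs_le_iff by (simp add: field_simps)
    also have "\<dots> \<le> \<epsilon> * (G (Suc i) - G i)"
      using a_bounds[OF that] G_mono[OF that] by (intro mult_right_mono) auto
    finally show ?thesis .
  qed
  have "\<bar>(\<Sum>i<n. q i) - (\<Sum>i<n. (G (Suc i) + G i) / 2 * a i)\<bar>
      \<le> (\<Sum>i<n. \<bar>q i - (G (Suc i) + G i) / 2 * a i\<bar>)"
    by (simp add: sum_subtractf[symmetric] sum_abs)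
  also have "\<dots> \<le> (\<Sum>i<n. \<epsilon> * (G (Suc i) - G i))"
    by (intro sum_mono term_error) simp
  also have "\<dots> = \<epsilon> * (G n - G 0)"
    by (simp add: sum_distrib_left[symmetric] sum_lessThan_telescope)
  also have "\<dots> \<le> \<epsilon>"
    using assms by (simp add: mult_left_le)
  finally show ?thesis .
qed

lemma grid_cell_exists:
  fixes f :: "nat \<Rightarrow> 'a :: linorder"
  assumes "f 0 < v" "v \<le> f n"
  shows "\<exists>i<n. f i < v \<and> v \<le> f (Suc i)"
  using assms(2)
proof (induction n)
  case 0
  then show ?case
    using assms(1) by simp
next
  case (Suc n)
  show ?case
  proof (cases "v \<le> f n")
    case True
    then show ?thesis
      using Suc.IH less_SucI by blast
  next
    case False
    then show ?thesis
      using Suc.prems by (intro exI[of _ n]) auto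
  qed
qed

lemma grid_cell_unique:
  fixes f :: "nat \<Rightarrow> 'a :: linorder"
  assumes "mono f" "f i < v" "v \<le> f (Suc i)" "f j < v" "v \<le> f (Suc j)"
  shows "i = j"
proof (rule ccontr)
  assume "i \<noteq> j"
  then have "f (Suc i) \<le> f j \<or> f (Suc j) \<le> f i"
    using monoD[OF assms(1), of "Suc i" j] monoD[OF assms(1), of "Suc j" i] by linarith
  then show False
    using assms(2-5) by auto
qed

context
  fixes M :: "'b measure" and F :: "'a \<Rightarrow> 'b \<Rightarrow> real" and X :: "'a set"
  assumes prob_M: "prob_space M" and finite_X: "finite X"
    and indep_F: "prob_space.indep_vars M (\<lambda>_. borel) F X"
begin

interpretation prob_space M
  by (rule prob_M)

lemma measurable_F: "z \<in> X \<Longrightarrow> F z \<in> borel_measurable M"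
  using indep_F by (simp add: indep_vars_def2)

lemma sets_ereal_le: "{r :: real. ereal r \<le> c} \<in> sets borel"
  by measurable

lemma sets_ereal_Ioc: "{r :: real. a < ereal r \<and> ereal r \<le> b} \<in> sets borel"
  by measurable

lemma events_F_le: "z \<in> X \<Longrightarrow> {\<omega> \<in> space M. ereal (F z \<omega>) \<le> c} \<in> events"
  using measurable_sets[OF measurable_F sets_ereal_le] by (simp add: vimage_def Int_def conj_commute)

lemma events_F_Ioc: "z \<in> X \<Longrightarrow> {\<omega> \<in> space M. a < ereal (F z \<omega>) \<and> ereal (F z \<omega>) \<le> b} \<in> events"
  using measurable_sets[OF measurable_F sets_ereal_Ioc] by (simp add: vimage_def Int_def conj_commute)

lemma events_winner: "x \<in> X \<Longrightarrow> {\<omega> \<in> space M. \<forall>z\<in>X - {x}. F z \<omega> \<le> F x \<omega>} \<in> events"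
  using finite_X measurable_F by (intro sets.sets_Collect_finite_All borel_measurable_le) auto

lemma g_fun_nonneg: "0 \<le> g_fun M F X x c"
  unfolding g_fun_def by (intro prod_nonneg) auto

lemma g_fun_le_1: "g_fun M F X x c \<le> 1"
  unfolding g_fun_def by (intro prod_le_1) auto

lemma g_fun_mono: "c \<le> d \<Longrightarrow> g_fun M F X x c \<le> g_fun M F X x d"
  unfolding g_fun_def
  by (intro prod_mono conjI finite_measure_mono events_F_le) (auto intro: order_trans)

lemma prob_cell_Int_all_le:
  assumes "x \<in> X"
  shows "prob {\<omega> \<in> space M. a < ereal (F x \<omega>) \<and> ereal (F x \<omega>) \<le> b \<and> (\<forall>z\<in>X - {x}. ereal (F z \<omega>) \<le> c)}
       = prob {\<omega> \<in> space M. a < ereal (F x \<omega>) \<and> ereal (F x \<omega>) \<le> b} * g_fun M F X x c"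
proof -
  define S where "S j = (if j = x then {r. a < ereal r \<and> ereal r \<le> b} else {r. ereal r \<le> c})" for j
  have "indep_sets (\<lambda>j. {F j -` B \<inter> space M | B. B \<in> sets borel}) X"
    using indep_F by (simp add: indep_vars_def2)
  moreover have "S j \<in> sets borel" for j
    using sets_ereal_le sets_ereal_Ioc by (simp add: S_def)
  ultimately have "prob (\<Inter>j\<in>X. F j -` S j \<inter> space M) = (\<Prod>j\<in>X. prob (F j -` S j \<inter> space M))"
    using assms finite_X by (intro indep_setsD) auto
  moreover have "(\<Inter>j\<in>X. F j -` S j \<inter> space M)
      = {\<omega> \<in> space M. a < ereal (F x \<omega>) \<and> ereal (F x \<omega>) \<le> b \<and> (\<forall>z\<in>X - {x}. ereal (F z \<omega>) \<le> c)}"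
    using assms by (auto simp: S_def split: if_splits)
  ultimately have "prob {\<omega> \<in> space M. a < ereal (F x \<omega>) \<and> ereal (F x \<omega>) \<le> b \<and> (\<forall>z\<in>X - {x}. ereal (F z \<omega>) \<le> c)}
      = (\<Prod>j\<in>X. prob (F j -` S j \<inter> space M))"
    by simp
  also have "\<dots> = prob (F x -` S x \<inter> space M) * (\<Prod>j\<in>X - {x}. prob (F j -` S j \<inter> space M))"
    using assms finite_X by (simp add: prod.remove)
  also have "(\<Prod>j\<in>X - {x}. prob (F j -` S j \<inter> space M)) = g_fun M F X x c"
    unfolding g_fun_def by (intro prod.cong) (auto simp: S_def intro!: arg_cong[where f=prob])
  also have "F x -` S x \<inter> space M = {\<omega> \<in> space M. a < ereal (F x \<omega>) \<and> ereal (F x \<omega>) \<le> b}"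
    by (auto simp: S_def)
  finally show ?thesis .
qed

lemma events_cell_all_le:
  assumes "x \<in> X"
  shows "{\<omega> \<in> space M. a < ereal (F x \<omega>) \<and> ereal (F x \<omega>) \<le> b \<and> (\<forall>z\<in>X - {x}. ereal (F z \<omega>) \<le> c)}
    \<in> events"
proof -
  have "{\<omega> \<in> space M. \<forall>z\<in>X - {x}. ereal (F z \<omega>) \<le> c} \<in> events"
    using finite_X events_F_le by (intro sets.sets_Collect_finite_All) auto
  from sets.sets_Collect_conj[OF this events_F_Ioc[OF assms, of a b]]
  show ?thesis
    by (simp only: conj_assoc)
qed

lemma prob_winner_cell_bounds:
  fixes a b :: ereal
  assumes "x \<in> X"
  defines "cell \<equiv> {\<omega> \<in> space M. a < ereal (F x \<omega>) \<and> ereal (F x \<omega>) \<le> b}"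
  shows "prob cell * g_fun M F X x a \<le> prob {\<omega> \<in> cell. \<forall>z\<in>X - {x}. F z \<omega> \<le> F x \<omega>}"
    and "prob {\<omega> \<in> cell. \<forall>z\<in>X - {x}. F z \<omega> \<le> F x \<omega>} \<le> prob cell * g_fun M F X x b"
proof -
  have "{\<omega> \<in> cell. \<forall>z\<in>X - {x}. F z \<omega> \<le> F x \<omega>} \<in> events"
    using sets.sets_Collect_conj[OF events_winner[OF assms(1)] events_F_Ioc[OF assms(1), of a b]]
    by (simp add: cell_def conj_assoc)
  moreover have "F z \<omega> \<le> F x \<omega>" if "ereal (F z \<omega>) \<le> a" "a < ereal (F x \<omega>)" for z \<omega>
    using le_less_trans[OF that] by simp
  ultimately have "prob {\<omega> \<in> cell. \<forall>z\<in>X - {x}. ereal (F z \<omega>) \<le> a}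
      \<le> prob {\<omega> \<in> cell. \<forall>z\<in>X - {x}. F z \<omega> \<le> F x \<omega>}"
    by (intro finite_measure_mono) (auto simp: cell_def)
  then show "prob cell * g_fun M F X x a \<le> prob {\<omega> \<in> cell. \<forall>z\<in>X - {x}. F z \<omega> \<le> F x \<omega>}"
    using prob_cell_Int_all_le[OF assms(1)] by (simp add: cell_def conj_assoc)
  have "ereal (F z \<omega>) \<le> b" if "F z \<omega> \<le> F x \<omega>" "ereal (F x \<omega>) \<le> b" for z \<omega>
    using order.trans[of "ereal (F z \<omega>)" "ereal (F x \<omega>)" b] that by simp
  then have "prob {\<omega> \<in> cell. \<forall>z\<in>X - {x}. F z \<omega> \<le> F x \<omega>}
      \<le> prob {\<omega> \<in> cell. \<forall>z\<in>X - {x}. ereal (F z \<omega>) \<le> b}"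
    using events_cell_all_le[OF assms(1), of a b b]
    by (intro finite_measure_mono) (auto simp: cell_def)
  then show "prob {\<omega> \<in> cell. \<forall>z\<in>X - {x}. F z \<omega> \<le> F x \<omega>} \<le> prob cell * g_fun M F X x b"
    using prob_cell_Int_all_le[OF assms(1)] by (simp add: cell_def conj_assoc)
qed

lemma p_tilde_eq_sum_cells:
  fixes f :: "nat \<Rightarrow> ereal"
  assumes "x \<in> X" "mono f" "f 0 = - \<infinity>" "f n = \<infinity>"
  shows "p_tilde M F X x = (\<Sum>i<n. prob {\<omega> \<in> space M. f i < ereal (F x \<omega>) \<and> ereal (F x \<omega>) \<le> f (Suc i)
                                            \<and> (\<forall>z\<in>X - {x}. F z \<omega> \<le> F x \<omega>)})"
proof -
  define W where "W i = {\<omega> \<in> space M. f i < ereal (F x \<omega>) \<and> ereal (F x \<omega>) \<le> f (Suc i)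
                                     \<and> (\<forall>z\<in>X - {x}. F z \<omega> \<le> F x \<omega>)}" for i
  have "{\<omega> \<in> space M. \<forall>z\<in>X - {x}. F z \<omega> \<le> F x \<omega>} = (\<Union>i<n. W i)"
    using grid_cell_exists[of f "ereal (F x _)" n] assms(3,4) by (auto simp: W_def)
  moreover have "disjoint_family_on W {..<n}"
    using grid_cell_unique[OF assms(2)] by (auto simp: W_def disjoint_family_on_def)
  moreover have "W i \<in> events" for i
    using sets.sets_Collect_conj[OF events_winner[OF assms(1)] events_F_Ioc[OF assms(1), of "f i" "f (Suc i)"]]
    by (simp add: W_def conj_assoc)
  ultimately have "p_tilde M F X x = prob (\<Union>i<n. W i)" "prob (\<Union>i<n. W i) = (\<Sum>i<n. prob (W i))"
    by (auto simp: p_tilde_def intro: finite_measure_finite_Union)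
  then show ?thesis
    by (simp add: W_def)
qed

lemma p_tilde_trapezoid_error:
  fixes f :: "nat \<Rightarrow> ereal"
  assumes "x \<in> X" "mono f" "f 0 = - \<infinity>" "f n = \<infinity>" "0 \<le> \<epsilon>"
    and cells: "\<And>i. i < n \<Longrightarrow> prob {\<omega> \<in> space M. f i < ereal (F x \<omega>) \<and> ereal (F x \<omega>) \<le> f (Suc i)} \<le> 2 * \<epsilon>"
  shows "\<bar>p_tilde M F X x
          - (\<Sum>i<n. (g_fun M F X x (f (Suc i)) + g_fun M F X x (f i)) / 2
               * prob {\<omega> \<in> space M. f i < ereal (F x \<omega>) \<and> ereal (F x \<omega>) \<le> f (Suc i)})\<bar> \<le> \<epsilon>"
proof -
  define a where "a i = prob {\<omega> \<in> space M. f i < ereal (F x \<omega>) \<and> ereal (F x \<omega>) \<le> f (Suc i)}" for i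
  define q where "q i = prob {\<omega> \<in> space M. f i < ereal (F x \<omega>) \<and> ereal (F x \<omega>) \<le> f (Suc i)
                                 \<and> (\<forall>z\<in>X - {x}. F z \<omega> \<le> F x \<omega>)}" for i
  define G where "G i = g_fun M F X x (f i)" for i
  have "\<bar>(\<Sum>i<n. q i) - (\<Sum>i<n. (G (Suc i) + G i) / 2 * a i)\<bar> \<le> \<epsilon>"
  proof (rule trapezoid_sum_error)
    fix i
    show "a i * G i \<le> q i \<and> q i \<le> a i * G (Suc i)"
      using prob_winner_cell_bounds[OF assms(1), of "f i" "f (Suc i)"]
      by (simp add: a_def q_def G_def conj_assoc mult.commute)
    show "0 \<le> a i \<and> a i \<le> 2 * \<epsilon>" if "i < n"
      using cells[OF that] by (simp add: a_def)
    show "G i \<le> G (Suc i)"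
      using g_fun_mono monoD[OF assms(2)] by (simp add: G_def)
  qed (use assms(5) g_fun_nonneg g_fun_le_1 in \<open>auto simp: G_def\<close>)
  then show ?thesis
    by (simp add: p_tilde_eq_sum_cells[OF assms(1-4)] a_def q_def G_def)
qed

end

lemma grid_n_ge_2: "2 \<le> grid_n X \<mu> \<sigma> \<epsilon>"
  by (simp add: grid_n_def)

lemma grid_f_0: "grid_f X \<mu> \<sigma> \<epsilon> 0 = - \<infinity>"
  by (simp add: grid_f_def)

lemma grid_f_grid_n: "grid_f X \<mu> \<sigma> \<epsilon> (grid_n X \<mu> \<sigma> \<epsilon>) = \<infinity>"
  using grid_n_ge_2[of X \<mu> \<sigma> \<epsilon>] by (simp add: grid_f_def)

context
  fixes X :: "'a set" and \<mu> \<sigma> :: "'a \<Rightarrow> real"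
  assumes finite_X: "finite X" and X_ne: "X \<noteq> {}" and \<sigma>_pos: "\<forall>x\<in>X. 0 < \<sigma> x"
begin

lemma Min_sigma_pos: "0 < Min (\<sigma> ` X)"
  using finite_X X_ne \<sigma>_pos by simp

lemma Max_sigma_pos: "0 < Max (\<sigma> ` X)"
  using finite_X X_ne \<sigma>_pos by (auto simp: Max_gr_iff)

lemma Min_le_Max_mu: "Min (\<mu> ` X) \<le> Max (\<mu> ` X)"
proof -
  obtain x where "x \<in> X"
    using X_ne by blast
  then have "Min (\<mu> ` X) \<le> \<mu> x" "\<mu> x \<le> Max (\<mu> ` X)"
    using finite_X by auto
  then show ?thesis
    by linarith
qed

context
  fixes \<epsilon> :: real
  assumes \<epsilon>_pos: "0 < \<epsilon>" and \<epsilon>_le: "\<epsilon> \<le> 1 / 4"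
begin

abbreviation "grid_lo \<equiv> Min (\<mu> ` X) - eps_tilde \<epsilon> * Max (\<sigma> ` X)"
abbreviation "grid_hi \<equiv> Max (\<mu> ` X) + eps_tilde \<epsilon> * Max (\<sigma> ` X)"

lemma grid_f_inner:
  "0 < i \<Longrightarrow> i < grid_n X \<mu> \<sigma> \<epsilon> \<Longrightarrow>
    grid_f X \<mu> \<sigma> \<epsilon> i = ereal (grid_lo + (real i - 1) / (real (grid_n X \<mu> \<sigma> \<epsilon>) - 2) * (grid_hi - grid_lo))"
  by (simp add: grid_f_def algebra_simps)

lemma grid_lo_le_hi: "grid_lo \<le> grid_hi"
  using Min_le_Max_mu mult_nonneg_nonneg[OF eps_tilde_nonneg[OF \<epsilon>_pos \<epsilon>_le] less_imp_le[OF Max_sigma_pos]]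
  by simp

lemma grid_span_le:
  "grid_hi - grid_lo \<le> (real (grid_n X \<mu> \<sigma> \<epsilon>) - 2) * (2 * sqrt (2 * pi) * \<epsilon> * Min (\<sigma> ` X))"
proof -
  have "0 < 2 * sqrt (2 * pi) * \<epsilon> * Min (\<sigma> ` X)"
    using Min_sigma_pos \<epsilon>_pos by simp
  moreover have "(grid_hi - grid_lo) / (2 * sqrt (2 * pi) * \<epsilon> * Min (\<sigma> ` X)) \<le> real (grid_n X \<mu> \<sigma> \<epsilon>) - 2"
    by (simp add: grid_n_def algebra_simps real_nat_ceiling_ge)
  ultimately show ?thesis
    by (simp add: pos_divide_le_eq)
qed

lemma grid_step_le:
  "(grid_hi - grid_lo) / (real (grid_n X \<mu> \<sigma> \<epsilon>) - 2) \<le> 2 * sqrt (2 * pi) * \<epsilon> * Min (\<sigma> ` X)"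
proof (cases "grid_n X \<mu> \<sigma> \<epsilon> = 2")
  case False
  then have "0 < real (grid_n X \<mu> \<sigma> \<epsilon>) - 2"
    using grid_n_ge_2[of X \<mu> \<sigma> \<epsilon>] by simp
  then show ?thesis
    using grid_span_le by (simp add: pos_divide_le_eq mult.commute)
qed (use Min_sigma_pos \<epsilon>_pos in simp)

lemma grid_lo_eq_hi_if_grid_n_2: "grid_n X \<mu> \<sigma> \<epsilon> = 2 \<Longrightarrow> grid_lo = grid_hi"
  using grid_span_le grid_lo_le_hi by simp

lemma grid_f_1: "grid_f X \<mu> \<sigma> \<epsilon> 1 = ereal grid_lo"
  using grid_f_inner[of 1] grid_n_ge_2[of X \<mu> \<sigma> \<epsilon>] by simp

lemma grid_f_last: "grid_f X \<mu> \<sigma> \<epsilon> (grid_n X \<mu> \<sigma> \<epsilon> - 1) = ereal grid_hi"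
proof (cases "grid_n X \<mu> \<sigma> \<epsilon> = 2")
  case True
  then show ?thesis
    using grid_f_1 grid_lo_eq_hi_if_grid_n_2 by simp
next
  case False
  then have "real (grid_n X \<mu> \<sigma> \<epsilon> - 1) - 1 = real (grid_n X \<mu> \<sigma> \<epsilon>) - 2" "real (grid_n X \<mu> \<sigma> \<epsilon>) - 2 \<noteq> 0"
    using grid_n_ge_2[of X \<mu> \<sigma> \<epsilon>] by (simp_all add: of_nat_diff)
  then show ?thesis
    using grid_f_inner[of "grid_n X \<mu> \<sigma> \<epsilon> - 1"] grid_n_ge_2[of X \<mu> \<sigma> \<epsilon>] by simp
qed

lemma grid_f_infinite: "grid_n X \<mu> \<sigma> \<epsilon> \<le> i \<Longrightarrow> grid_f X \<mu> \<sigma> \<epsilon> i = \<infinity>"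
  using grid_n_ge_2[of X \<mu> \<sigma> \<epsilon>] by (simp add: grid_f_def)

lemma mono_grid_f: "mono (grid_f X \<mu> \<sigma> \<epsilon>)"
  unfolding mono_iff_le_Suc
proof
  fix i
  consider "i = 0" | "grid_n X \<mu> \<sigma> \<epsilon> \<le> Suc i" | "0 < i" "Suc i < grid_n X \<mu> \<sigma> \<epsilon>"
    by linarith
  then show "grid_f X \<mu> \<sigma> \<epsilon> i \<le> grid_f X \<mu> \<sigma> \<epsilon> (Suc i)"
  proof cases
    case 3
    have "(real i - 1) / (real (grid_n X \<mu> \<sigma> \<epsilon>) - 2) \<le> (real (Suc i) - 1) / (real (grid_n X \<mu> \<sigma> \<epsilon>) - 2)"
      using 3 by (intro divide_right_mono) auto
    then have "grid_lo + (real i - 1) / (real (grid_n X \<mu> \<sigma> \<epsilon>) - 2) * (grid_hi - grid_lo)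
        \<le> grid_lo + (real (Suc i) - 1) / (real (grid_n X \<mu> \<sigma> \<epsilon>) - 2) * (grid_hi - grid_lo)"
      using grid_lo_le_hi by (intro add_left_mono mult_right_mono) auto
    moreover have
      "grid_f X \<mu> \<sigma> \<epsilon> i
        = ereal (grid_lo + (real i - 1) / (real (grid_n X \<mu> \<sigma> \<epsilon>) - 2) * (grid_hi - grid_lo))"
      "grid_f X \<mu> \<sigma> \<epsilon> (Suc i)
        = ereal (grid_lo + (real (Suc i) - 1) / (real (grid_n X \<mu> \<sigma> \<epsilon>) - 2) * (grid_hi - grid_lo))"
      using 3 by (intro grid_f_inner; simp)+
    ultimately show ?thesis
      by simp
  qed (simp_all add: grid_f_0 grid_f_infinite)
qed

lemma grid_f_Suc_diff:
  "0 < i \<Longrightarrow> Suc i < grid_n X \<mu> \<sigma> \<epsilon> \<Longrightarrow>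
    grid_f X \<mu> \<sigma> \<epsilon> (Suc i) - grid_f X \<mu> \<sigma> \<epsilon> i = ereal ((grid_hi - grid_lo) / (real (grid_n X \<mu> \<sigma> \<epsilon>) - 2))"
  by (simp add: grid_f_inner diff_divide_distrib[symmetric] left_diff_distrib[symmetric])

lemma grid_lo_le_lower:
  assumes "x \<in> X"
  shows "grid_lo \<le> \<mu> x - eps_tilde \<epsilon> * \<sigma> x"
proof -
  have "eps_tilde \<epsilon> * \<sigma> x \<le> eps_tilde \<epsilon> * Max (\<sigma> ` X)"
    using eps_tilde_nonneg[OF \<epsilon>_pos \<epsilon>_le] finite_X assms by (simp add: mult_left_mono)
  moreover have "Min (\<mu> ` X) \<le> \<mu> x"
    using finite_X assms by simp
  ultimately show ?thesis
    by linarith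
qed

lemma grid_hi_ge_upper:
  assumes "x \<in> X"
  shows "\<mu> x + eps_tilde \<epsilon> * \<sigma> x \<le> grid_hi"
proof -
  have "eps_tilde \<epsilon> * \<sigma> x \<le> eps_tilde \<epsilon> * Max (\<sigma> ` X)"
    using eps_tilde_nonneg[OF \<epsilon>_pos \<epsilon>_le] finite_X assms by (simp add: mult_left_mono)
  moreover have "\<mu> x \<le> Max (\<mu> ` X)"
    using finite_X assms by simp
  ultimately show ?thesis
    by linarith
qed

lemma prob_grid_cell_le:
  assumes "prob_space M" and "x \<in> X"
    and Y: "distributed M lborel Y (\<lambda>t. ennreal (normal_density (\<mu> x) (\<sigma> x) t))"
    and "i < grid_n X \<mu> \<sigma> \<epsilon>"
  shows "measure M {\<omega> \<in> space M. grid_f X \<mu> \<sigma> \<epsilon> i < ereal (Y \<omega>)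
                                 \<and> ereal (Y \<omega>) \<le> grid_f X \<mu> \<sigma> \<epsilon> (Suc i)} \<le> 2 * \<epsilon>"
proof -
  have "0 < \<sigma> x"
    using \<sigma>_pos assms(2) by blast
  note normal = assms(1) this Y
  consider "i = 0" | "0 < i" "Suc i = grid_n X \<mu> \<sigma> \<epsilon>" | "0 < i" "Suc i < grid_n X \<mu> \<sigma> \<epsilon>"
    using assms(4) by linarith
  then show ?thesis
  proof cases
    case 1
    then show ?thesis
      using prob_normal_le_lower_tail[OF normal grid_lo_le_lower[OF assms(2)]]
        Phi_minus_eps_tilde[OF \<epsilon>_pos \<epsilon>_le]
      by (simp add: grid_f_0 grid_f_1[unfolded One_nat_def])
  next
    case 2
    then have "i = grid_n X \<mu> \<sigma> \<epsilon> - 1"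
      by simp
    then show ?thesis
      using 2 prob_normal_gt_upper_tail[OF normal grid_hi_ge_upper[OF assms(2)]]
        Phi_minus_eps_tilde[OF \<epsilon>_pos \<epsilon>_le]
      by (simp add: grid_f_last[unfolded One_nat_def] grid_f_infinite)
  next
    case 3
    then obtain a b where ab: "grid_f X \<mu> \<sigma> \<epsilon> i = ereal a" "grid_f X \<mu> \<sigma> \<epsilon> (Suc i) = ereal b"
      using grid_f_inner by (meson Suc_lessD zero_less_Suc)
    then have "b - a = (grid_hi - grid_lo) / (real (grid_n X \<mu> \<sigma> \<epsilon>) - 2)" "a \<le> b"
      using grid_f_Suc_diff[OF 3] monoD[OF mono_grid_f, of i "Suc i"] by auto
    then have "measure M {\<omega> \<in> space M. grid_f X \<mu> \<sigma> \<epsilon> i < ereal (Y \<omega>)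
                                   \<and> ereal (Y \<omega>) \<le> grid_f X \<mu> \<sigma> \<epsilon> (Suc i)}
        \<le> (grid_hi - grid_lo) / (real (grid_n X \<mu> \<sigma> \<epsilon>) - 2) / (\<sigma> x * sqrt (2 * pi))"
      using prob_normal_Ioc_le[OF normal, of a b] by (simp add: ab)
    also have "\<dots> \<le> 2 * sqrt (2 * pi) * \<epsilon> * Min (\<sigma> ` X) / (\<sigma> x * sqrt (2 * pi))"
      using grid_step_le \<open>0 < \<sigma> x\<close> by (intro divide_right_mono) auto
    also have "\<dots> \<le> 2 * \<epsilon>"
      using Min_le[of "\<sigma> ` X"] finite_X assms(2) \<open>0 < \<sigma> x\<close> \<epsilon>_pos
      by (simp add: divide_le_eq)
    finally show ?thesis .
  qed
qed

end

lemma grid_n_sqrt_ln_bounds: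
  assumes e: "0 < e" "e \<le> 1 / 4" and L: "10 \<le> ln (1 / e)"
  defines "A \<equiv> Max (\<mu> ` X) - Min (\<mu> ` X)" and "S \<equiv> Max (\<sigma> ` X)"
    and "K \<equiv> 2 * sqrt (2 * pi) * Min (\<sigma> ` X)"
  shows "S / K * (sqrt (ln (1 / e)) / e) \<le> real (grid_n X \<mu> \<sigma> e)"
    and "real (grid_n X \<mu> \<sigma> e) \<le> (A / K + 2 * sqrt 2 * S / K + 3) * (sqrt (ln (1 / e)) / e)"
proof -
  have "0 \<le> A" "0 < S" "0 < K"
    using Min_le_Max_mu Max_sigma_pos Min_sigma_pos by (simp_all add: A_def S_def K_def)
  define t where "t = eps_tilde e"
  define L where "L = ln (1 / e)"
  define r where "r = (A + 2 * t * S) / (K * e)"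
  have t: "sqrt L \<le> 2 * t" "t \<le> sqrt 2 * sqrt L" "0 \<le> t"
    using eps_tilde_ge_sqrt_ln[OF e L] eps_tilde_le_sqrt_ln[OF e] eps_tilde_nonneg[OF e]
    by (simp_all add: t_def L_def)
  have "1 \<le> sqrt L"
    using L by (simp add: L_def)
  have "0 \<le> r"
    using \<open>0 \<le> A\<close> \<open>0 < S\<close> \<open>0 < K\<close> e t(3) by (simp add: r_def)
  have n: "real (grid_n X \<mu> \<sigma> e) = real (nat \<lceil>r\<rceil>) + 2"
    by (simp add: grid_n_def r_def A_def S_def K_def t_def mult_ac)
  have "S / K * (sqrt L / e) = S * sqrt L / (K * e)"
    by simp
  also have "\<dots> \<le> r"
  proof (unfold r_def, intro divide_right_mono)
    have "S * sqrt L \<le> S * (2 * t)"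
      using t(1) \<open>0 < S\<close> by (intro mult_left_mono) auto
    then show "S * sqrt L \<le> A + 2 * t * S"
      using \<open>0 \<le> A\<close> by (simp add: mult_ac)
  qed (use \<open>0 < K\<close> e in simp)
  also have "\<dots> \<le> real (grid_n X \<mu> \<sigma> e)"
    using n real_nat_ceiling_ge[of r] by simp
  finally show "S / K * (sqrt (ln (1 / e)) / e) \<le> real (grid_n X \<mu> \<sigma> e)"
    by (simp add: L_def)
  have "real (grid_n X \<mu> \<sigma> e) \<le> (A + 2 * t * S) / (K * e) + 3"
    using n \<open>0 \<le> r\<close> by (simp add: r_def) linarith
  also have "\<dots> \<le> (A * sqrt L + 2 * sqrt 2 * sqrt L * S) / (K * e) + 3 * sqrt L / e"
  proof (rule add_mono[OF divide_right_mono])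
    have "A \<le> A * sqrt L"
      using mult_left_mono[OF \<open>1 \<le> sqrt L\<close> \<open>0 \<le> A\<close>] by simp
    moreover have "2 * t * S \<le> 2 * sqrt 2 * sqrt L * S"
      using mult_right_mono[OF t(2), of "2 * S"] \<open>0 < S\<close> by (simp add: mult_ac)
    ultimately show "A + 2 * t * S \<le> A * sqrt L + 2 * sqrt 2 * sqrt L * S"
      by simp
    show "3 \<le> 3 * sqrt L / e"
      using \<open>1 \<le> sqrt L\<close> e by (simp add: le_divide_eq del: real_sqrt_ge_1_iff)
    show "0 \<le> K * e"
      using \<open>0 < K\<close> e by simp
  qed
  also have "\<dots> = (A / K + 2 * sqrt 2 * S / K + 3) * (sqrt L / e)"
    using \<open>0 < K\<close> e by (simp add: field_simps)
  finally show "real (grid_n X \<mu> \<sigma> e) \<le> (A / K + 2 * sqrt 2 * S / K + 3) * (sqrt (ln (1 / e)) / e)"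
    by (simp add: L_def)
qed

lemma grid_n_bigtheta: "(\<lambda>e. real (grid_n X \<mu> \<sigma> e)) \<in> \<Theta>[at_right 0](\<lambda>e. sqrt (ln (1 / e)) / e)"
proof -
  define A where "A = Max (\<mu> ` X) - Min (\<mu> ` X)"
  define S where "S = Max (\<sigma> ` X)"
  define K where "K = 2 * sqrt (2 * pi) * Min (\<sigma> ` X)"
  have "0 < S / K"
    using Max_sigma_pos Min_sigma_pos by (simp add: S_def K_def)
  moreover have "0 < A / K + 2 * sqrt 2 * S / K + 3"
    using Min_le_Max_mu Max_sigma_pos Min_sigma_pos
    by (intro add_nonneg_pos add_nonneg_nonneg) (simp_all add: A_def S_def K_def)
  moreover have "\<forall>\<^sub>F e in at_right 0. 0 < e \<and> e \<le> 1 / 4 \<and> 10 \<le> ln (1 / (e :: real))"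
    by (intro eventually_conj eventually_at_right_less; real_asymp)
  then have "\<forall>\<^sub>F e in at_right 0.
      S / K * norm (sqrt (ln (1 / e)) / e) \<le> norm (real (grid_n X \<mu> \<sigma> e))
      \<and> norm (real (grid_n X \<mu> \<sigma> e)) \<le> (A / K + 2 * sqrt 2 * S / K + 3) * norm (sqrt (ln (1 / e)) / e)"
    by eventually_elim (use grid_n_sqrt_ln_bounds in \<open>simp add: A_def S_def K_def\<close>)
  ultimately show ?thesis
    by (rule bigthetaI')
qed

end

theorem proposition1:
  fixes M :: "'b measure" and X :: "'a set" and \<mu> \<sigma> :: "'a \<Rightarrow> real"
    and F :: "'a \<Rightarrow> 'b \<Rightarrow> real" and \<epsilon> :: real
  assumes "prob_space M"
    and "finite X" and "X \<noteq> {}"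
    and "\<forall>x\<in>X. \<sigma> x > 0"
    and "\<forall>x\<in>X. distributed M lborel (F x) (\<lambda>t. ennreal (normal_density (\<mu> x) (\<sigma> x) t))"
    and "prob_space.indep_vars M (\<lambda>_. borel) F X"
    and "0 < \<epsilon>" and "\<epsilon> \<le> 1/4"
  shows "(\<forall>x\<in>X.
           \<bar>p_tilde M F X x
            - (\<Sum>i<grid_n X \<mu> \<sigma> \<epsilon>.
                 (g_fun M F X x (grid_f X \<mu> \<sigma> \<epsilon> (Suc i)) + g_fun M F X x (grid_f X \<mu> \<sigma> \<epsilon> i)) / 2
                 * measure M {\<omega> \<in> space M. grid_f X \<mu> \<sigma> \<epsilon> i < ereal (F x \<omega>)
                                        \<and> ereal (F x \<omega>) \<le> grid_f X \<mu> \<sigma> \<epsilon> (Suc i)})\<bar> \<le> \<epsilon>)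
         \<and> (\<lambda>e. real (grid_n X \<mu> \<sigma> e)) \<in> \<Theta>[at_right 0](\<lambda>e. sqrt (ln (1 / e)) / e)"
proof -
  have "\<bar>p_tilde M F X x
          - (\<Sum>i<grid_n X \<mu> \<sigma> \<epsilon>.
               (g_fun M F X x (grid_f X \<mu> \<sigma> \<epsilon> (Suc i)) + g_fun M F X x (grid_f X \<mu> \<sigma> \<epsilon> i)) / 2
               * measure M {\<omega> \<in> space M. grid_f X \<mu> \<sigma> \<epsilon> i < ereal (F x \<omega>)
                                      \<and> ereal (F x \<omega>) \<le> grid_f X \<mu> \<sigma> \<epsilon> (Suc i)})\<bar> \<le> \<epsilon>"
    if "x \<in> X" for x
  proof (rule p_tilde_trapezoid_error[OF assms(1,2,6) that])
    show "mono (grid_f X \<mu> \<sigma> \<epsilon>)"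
      by (rule mono_grid_f[OF assms(2-4,7,8)])
    show "measure M {\<omega> \<in> space M. grid_f X \<mu> \<sigma> \<epsilon> i < ereal (F x \<omega>)
                                \<and> ereal (F x \<omega>) \<le> grid_f X \<mu> \<sigma> \<epsilon> (Suc i)} \<le> 2 * \<epsilon>"
      if "i < grid_n X \<mu> \<sigma> \<epsilon>" for i
      using prob_grid_cell_le[where \<mu> = \<mu>, OF assms(2-4,7,8,1) \<open>x \<in> X\<close> _ that]
        assms(5) \<open>x \<in> X\<close> by blast
  qed (use assms(7) grid_f_0 grid_f_grid_n in auto)
  then show ?thesis
    using grid_n_bigtheta[OF assms(2-4)] by blast
qed

end
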